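(* Consider the FitzHugh–Nagumo system $\dot x_1=x_1-x_1^3/3-x_2+I$, $\dot x_2=cx_1-bx_2+a$ with real parameters satisfying $0<b<1$ and $b<c$. Let $\sigma\in\{1,-1\}$, $y_1^*=\sigma\sqrt{1-b}$, $y_2^*=(a+cy_1^* )/b$, and $I=y_2^*-y_1^*+(y_1^* )^3/3$. Then $(y_1^*,y_2^* )$ is a stationary point at which the Jacobian has trace zero and positive determinant $c-b^2$, hence a nonzero purely imaginary pair of eigenvalues. In translated coordinates $u=x_1-y_1^*$, $w=x_2-y_2^*$, the quadratic form $\psi=cu^2-2buw+w^2$ is positive definite and spans the kernel of the Lie derivative of the linearization on quadratic forms, and there is $\widehat\psi=\psi+O(|(u,w)|^3)$ with $$L_q(\widehat\psi)=-\frac{b^2-2b+c}{4(b^2-c)^2}\,\psi^2+O(|(u,w)|^5),$$ where $q$ is the (translated) vector field. In particular this coefficient is negative whenever $c\ge1$.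
   Context: For a vector field $g$, $L_g(\sigma)(x)=D\sigma(x)g(x)$. *)

theory Defs
  imports "HOL-Analysis.Analysis" "HOL-Library.Landau_Symbols"
begin

definition fhn :: "real \<Rightarrow> real \<Rightarrow> real \<Rightarrow> real \<Rightarrow> real^2 \<Rightarrow> real^2" where
  "fhn a b c I x = vector [x$1 - (x$1)^3/3 - x$2 + I, c * x$1 - b * x$2 + a]"

definition lie_deriv :: "('a::real_normed_vector \<Rightarrow> 'a) \<Rightarrow> ('a \<Rightarrow> real) \<Rightarrow> 'a \<Rightarrow> real" where
  "lie_deriv g \<sigma> x = frechet_derivative \<sigma> (at x) (g x)"

definition cplx_eigenvalue :: "real^'n^'n \<Rightarrow> complex \<Rightarrow> bool" where
  "cplx_eigenvalue A l \<longleftrightarrow>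
     (\<exists>v::complex^'n. v \<noteq> 0 \<and> (\<chi> i j. complex_of_real (A$i$j)) *v v = l *s v)"

definition fhn_y1 :: "real \<Rightarrow> real \<Rightarrow> real" where
  "fhn_y1 b \<sigma> = \<sigma> * sqrt (1 - b)"
definition fhn_y2 :: "real \<Rightarrow> real \<Rightarrow> real \<Rightarrow> real \<Rightarrow> real" where
  "fhn_y2 a b c \<sigma> = (a + c * fhn_y1 b \<sigma>) / b"
definition fhn_I :: "real \<Rightarrow> real \<Rightarrow> real \<Rightarrow> real \<Rightarrow> real" where
  "fhn_I a b c \<sigma> = fhn_y2 a b c \<sigma> - fhn_y1 b \<sigma> + (fhn_y1 b \<sigma>)^3 / 3"
definition fhn_ys :: "real \<Rightarrow> real \<Rightarrow> real \<Rightarrow> real \<Rightarrow> real^2" where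
  "fhn_ys a b c \<sigma> = vector [fhn_y1 b \<sigma>, fhn_y2 a b c \<sigma>]"

end

theory Submission
  imports Defs
begin

text \<open>The correction \<open>\<psi>h = \<psi> + (cubic) + (quartic)\<close> is found degree by degree from homological
equations: in each degree the Lie derivative along the linear part is a linear map on forms.
On cubics it is invertible; on quartics its image misses exactly the direction \<open>\<psi>\<^sup>2\<close>, and the
component of the degree-4 residue in that direction is the coefficient \<open>-K\<close>.\<close>

lemma has_derivative_vec_nth [derivative_intros]: "((\<lambda>z. z $ i) has_derivative (\<lambda>h. h $ i)) F"
  by (rule bounded_linear_imp_has_derivative) (rule bounded_linear_vec_nth)

lemma has_derivative_imp_lie_deriv:
  "(\<sigma> has_derivative \<sigma>') (at z) \<Longrightarrow> lie_deriv g \<sigma> z = \<sigma>' (g z)"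
  unfolding lie_deriv_def using frechet_derivative_at by metis

text \<open>In the derivatives the truncated exponent \<open>0 - 1 = 0\<close> is harmless, as the coefficient is then 0.\<close>

definition monomial_sum :: "(real \<times> nat \<times> nat) list \<Rightarrow> real \<Rightarrow> real \<Rightarrow> real" where
  "monomial_sum ms u w = (\<Sum>(c, i, j) \<leftarrow> ms. c * u^i * w^j)"

definition monomials_dx :: "(real \<times> nat \<times> nat) list \<Rightarrow> (real \<times> nat \<times> nat) list" where
  "monomials_dx = map (\<lambda>(c, i, j). (c * of_nat i, i - 1, j))"

definition monomials_dy :: "(real \<times> nat \<times> nat) list \<Rightarrow> (real \<times> nat \<times> nat) list" where
  "monomials_dy = map (\<lambda>(c, i, j). (c * of_nat j, i, j - 1))"

definition monomial_coeff :: "(real \<times> nat \<times> nat) list \<Rightarrow> nat \<Rightarrow> nat \<Rightarrow> real" where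
  "monomial_coeff ms k l = (\<Sum>(c, i, j) \<leftarrow> ms. if (i, j) = (k, l) then c else 0)"

lemma monomial_sum_Nil [simp]: "monomial_sum [] u w = 0"
  and monomial_sum_Cons [simp]: "monomial_sum ((c, i, j) # ms) u w = c * u^i * w^j + monomial_sum ms u w"
  by (simp_all add: monomial_sum_def)

lemma has_derivative_monomial_sum:
  fixes p q :: "'n::finite"
  shows "((\<lambda>z::real^'n. monomial_sum ms (z$p) (z$q)) has_derivative
     (\<lambda>h. monomial_sum (monomials_dx ms) (z$p) (z$q) * h$p + monomial_sum (monomials_dy ms) (z$p) (z$q) * h$q)) (at z)"
proof (induction ms)
  case Nil
  then show ?case by (simp add: monomials_dx_def monomials_dy_def)
next
  case (Cons m ms)
  obtain c i j where m: "m = (c, i, j)" by (cases m)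
  have "((\<lambda>z::real^'n. c * (z$p)^i * (z$q)^j) has_derivative
     (\<lambda>h. c * of_nat i * (z$p)^(i - 1) * (z$q)^j * h$p + c * of_nat j * (z$p)^i * (z$q)^(j - 1) * h$q)) (at z)"
    by (rule derivative_eq_intros refl | simp)+ (simp add: algebra_simps)
  from has_derivative_add[OF this Cons.IH] show ?case
    by (simp add: m monomials_dx_def monomials_dy_def algebra_simps)
qed

lemma monomial_sum_eq_double_sum:
  assumes "\<forall>(c, i, j) \<in> set ms. i \<le> N \<and> j \<le> N"
  shows "monomial_sum ms u w = (\<Sum>i\<le>N. \<Sum>j\<le>N. monomial_coeff ms i j * u^i * w^j)"
  using assms
proof (induction ms)
  case Nil
  then show ?case by (simp add: monomial_coeff_def)
next
  case (Cons m ms)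
  obtain c i j where m: "m = (c, i, j)" by (cases m)
  have "(\<Sum>k\<le>N. \<Sum>l\<le>N. (if (i, j) = (k, l) then c else 0) * u^k * w^l)
      = (\<Sum>x \<in> {..N} \<times> {..N}. if (i, j) = x then c * u^i * w^j else 0)"
    unfolding sum.cartesian_product by (rule sum.cong) (auto split: if_splits)
  also have "\<dots> = c * u^i * w^j"
    using Cons.prems by (simp add: m sum.delta)
  finally have "c * u^i * w^j = (\<Sum>k\<le>N. \<Sum>l\<le>N. (if (i, j) = (k, l) then c else 0) * u^k * w^l)" ..
  with Cons show ?case
    by (simp add: m monomial_coeff_def sum.distrib distrib_right)
qed

lemma monomial_bigo_norm_power:
  fixes p q :: "'n::finite"
  assumes "k \<le> i + j"
  shows "(\<lambda>z::real^'n. c * (z$p)^i * (z$q)^j) \<in> O[at 0](\<lambda>z. norm z ^ k)"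
proof (rule bigoI[where c="\<bar>c\<bar>"])
  have "eventually (\<lambda>z::real^'n. norm z \<le> 1) (at 0)"
    unfolding eventually_at by (rule exI[of _ 1]) (auto simp: dist_norm)
  then show "eventually (\<lambda>z::real^'n. norm (c * (z$p)^i * (z$q)^j) \<le> \<bar>c\<bar> * norm (norm z ^ k)) (at 0)"
  proof eventually_elim
    case (elim z)
    have "\<bar>z$p\<bar>^i * \<bar>z$q\<bar>^j \<le> norm z ^ i * norm z ^ j"
      by (intro mult_mono power_mono) (auto simp: component_le_norm_cart)
    also have "\<dots> \<le> norm z ^ k"
      using elim assms by (simp add: power_add[symmetric] power_decreasing)
    finally show ?case
      by (simp add: abs_mult power_abs mult_left_mono mult.assoc)
  qed
qed

lemma monomial_sum_bigo_norm_power: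
  fixes p q :: "'n::finite"
  assumes "\<forall>(c, i, j) \<in> set ms. k \<le> i + j"
  shows "(\<lambda>z::real^'n. monomial_sum ms (z$p) (z$q)) \<in> O[at 0](\<lambda>z. norm z ^ k)"
  using assms
proof (induction ms)
  case (Cons m ms)
  obtain c i j where m: "m = (c, i, j)" by (cases m)
  with Cons monomial_bigo_norm_power[of k i j c p q] show ?case
    by (auto intro!: sum_in_bigo)
qed simp

lemma det_eq_0_iff_nontrivial_kernel:
  fixes M :: "'a::field^'n^'n"
  shows "det M = 0 \<longleftrightarrow> (\<exists>v. v \<noteq> 0 \<and> M *v v = 0)"
  using invertible_det_nz[of M] invertible_left_inverse[of M] matrix_left_invertible_ker[of M]
  by blast

lemma mat_vector_mult: "mat k *v v = k *s (v :: 'a::semiring_1^'n)"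
  by (simp add: vec_eq_iff matrix_vector_mult_def mat_def if_distrib[of "\<lambda>x. x * _"] sum.delta cong: if_cong)

lemma cplx_eigenvalue_2_iff:
  fixes A :: "real^2^2"
  shows "cplx_eigenvalue A l \<longleftrightarrow> l^2 - of_real (trace A) * l + of_real (det A) = 0"
proof -
  let ?M = "(\<chi> i j. complex_of_real (A$i$j)) - mat l"
  have "cplx_eigenvalue A l \<longleftrightarrow> (\<exists>v. v \<noteq> 0 \<and> ?M *v v = 0)"
    unfolding cplx_eigenvalue_def matrix_vector_mult_diff_rdistrib mat_vector_mult
    by (simp add: right_minus_eq)
  also have "\<dots> \<longleftrightarrow> det ?M = 0"
    by (rule det_eq_0_iff_nontrivial_kernel[symmetric])
  also have "det ?M = l^2 - of_real (trace A) * l + of_real (det A)"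
    by (simp add: det_2 trace_def sum_2 mat_def power2_eq_square algebra_simps)
  finally show ?thesis .
qed


lemma cplx_eigenvalue_2_traceless:
  fixes A :: "real^2^2"
  assumes "trace A = 0" "det A = \<omega>^2"
  shows "cplx_eigenvalue A l \<longleftrightarrow> l = \<i> * of_real \<omega> \<or> l = - \<i> * of_real \<omega>"
proof -
  have "l^2 - of_real (trace A) * l + of_real (det A) = (l - \<i> * of_real \<omega>) * (l + \<i> * of_real \<omega>)"
    using assms by (simp add: algebra_simps power2_eq_square)
  then show ?thesis
    by (simp add: cplx_eigenvalue_2_iff eq_neg_iff_add_eq_0)
qed

lemma quadratic_form_pos:
  fixes b c u w :: real
  assumes "b^2 < c" "u \<noteq> 0 \<or> w \<noteq> 0"
  shows "c * u^2 - 2 * b * u * w + w^2 > 0"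
proof -
  have eq: "c * u^2 - 2 * b * u * w + w^2 = (w - b * u)^2 + (c - b^2) * u^2"
    by (simp add: algebra_simps power2_eq_square)
  show ?thesis
  proof (cases "u = 0")
    case True
    then show ?thesis using assms(2) by simp
  next
    case False
    then have "(c - b^2) * u^2 > 0" using assms(1) by simp
    moreover have "(w - b * u)^2 \<ge> 0" by simp
    ultimately show ?thesis unfolding eq by linarith
  qed
qed

lemma lie_deriv_linear_quadratic_form:
  fixes J :: "real^2^2"
  shows "lie_deriv (\<lambda>z. J *v z) (\<lambda>z. \<alpha> * (z$1)^2 + \<beta> * (z$1) * (z$2) + \<gamma> * (z$2)^2) z =
    (2 * \<alpha> * z$1 + \<beta> * z$2) * (J$1$1 * z$1 + J$1$2 * z$2)
    + (\<beta> * z$1 + 2 * \<gamma> * z$2) * (J$2$1 * z$1 + J$2$2 * z$2)"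
proof -
  have "((\<lambda>z::real^2. \<alpha> * (z$1)^2 + \<beta> * (z$1) * (z$2) + \<gamma> * (z$2)^2) has_derivative
      (\<lambda>h. (2 * \<alpha> * z$1 + \<beta> * z$2) * h$1 + (\<beta> * z$1 + 2 * \<gamma> * z$2) * h$2)) (at z)"
    by (rule derivative_eq_intros refl | simp)+ (simp add: algebra_simps)
  then show ?thesis
    by (simp add: has_derivative_imp_lie_deriv matrix_vector_mult_def sum_2)
qed

lemma quadratic_first_integrals_fhn_linearization:
  fixes J :: "real^2^2"
  assumes "J = vector [vector [b, -1], vector [c, -b]]"
  shows "(\<forall>z. lie_deriv (\<lambda>z. J *v z) (\<lambda>z. \<alpha> * (z$1)^2 + \<beta> * (z$1) * (z$2) + \<gamma> * (z$2)^2) z = 0)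
    \<longleftrightarrow> (\<exists>t. \<alpha> = t * c \<and> \<beta> = - 2 * b * t \<and> \<gamma> = t)"
proof -
  have L: "lie_deriv (\<lambda>z. J *v z) (\<lambda>z. \<alpha> * (z$1)^2 + \<beta> * (z$1) * (z$2) + \<gamma> * (z$2)^2) z =
      (2*\<alpha>*b + \<beta>*c) * (z$1)^2 + (2*\<gamma>*c - 2*\<alpha>) * z$1 * z$2 - (\<beta> + 2*\<gamma>*b) * (z$2)^2" for z
    unfolding lie_deriv_linear_quadratic_form assms by (simp add: algebra_simps power2_eq_square)
  show ?thesis
  proof
    assume H: "\<forall>z. lie_deriv (\<lambda>z. J *v z) (\<lambda>z. \<alpha> * (z$1)^2 + \<beta> * (z$1) * (z$2) + \<gamma> * (z$2)^2) z = 0"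
    have u2: "2*\<alpha>*b + \<beta>*c = 0" using H[rule_format, of "vector [1, 0]"] by (simp add: L)
    have w2: "\<beta> + 2*\<gamma>*b = 0" using H[rule_format, of "vector [0, 1]"] by (simp add: L)
    have uw: "2*\<gamma>*c - 2*\<alpha> = 0" using H[rule_format, of "vector [1, 1]"] u2 w2 by (simp add: L)
    show "\<exists>t. \<alpha> = t * c \<and> \<beta> = - 2 * b * t \<and> \<gamma> = t"
      using w2 uw by (intro exI[of _ \<gamma>]) (simp add: algebra_simps)
  next
    assume "\<exists>t. \<alpha> = t * c \<and> \<beta> = - 2 * b * t \<and> \<gamma> = t"
    then show "\<forall>z. lie_deriv (\<lambda>z. J *v z) (\<lambda>z. \<alpha> * (z$1)^2 + \<beta> * (z$1) * (z$2) + \<gamma> * (z$2)^2) z = 0"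
      unfolding L by (auto simp: algebra_simps)
  qed
qed

lemma vector_2_eq_axis: "vector [p, q] = p *\<^sub>R axis 1 (1::real) + q *\<^sub>R (axis 2 1 :: real^2)"
  by (simp add: vec_eq_iff forall_2 axis_def)

lemma fhn_has_derivative:
  "(fhn a b c I has_derivative (\<lambda>h. vector [(1 - (x$1)^2) * h$1 - h$2, c * h$1 - b * h$2])) (at x)"
  unfolding fhn_def vector_2_eq_axis
  by (rule derivative_eq_intros refl | simp)+ (simp add: algebra_simps)

lemma jacobian_fhn:
  "jacobian (fhn a b c I) (at x) = vector [vector [1 - (x$1)^2, -1], vector [c, -b]]"
  unfolding jacobian_def frechet_derivative_at[OF fhn_has_derivative, symmetric]
  by (simp add: matrix_def vec_eq_iff forall_2 axis_def)

lemma fhn_y1_squared: "\<sigma> \<in> {1, -1} \<Longrightarrow> b \<le> 1 \<Longrightarrow> (fhn_y1 b \<sigma>)^2 = 1 - b"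
  by (auto simp: fhn_y1_def power_mult_distrib)

lemma fhn_translated:
  assumes "b \<noteq> 0" and y: "(fhn_y1 b \<sigma>)^2 = 1 - b"
  shows "fhn a b c (fhn_I a b c \<sigma>) (z + fhn_ys a b c \<sigma>) =
    vector [b * z$1 - z$2 - fhn_y1 b \<sigma> * (z$1)^2 - (z$1)^3/3, c * z$1 - b * z$2]"
proof -
  define y where "y = fhn_y1 b \<sigma>"
  have "(z$1 + y) - (z$1 + y)^3/3 + y^3/3 - y = (1 - y^2) * z$1 - y * (z$1)^2 - (z$1)^3/3"
    by (simp add: algebra_simps power2_eq_square power3_eq_cube)
  also have "\<dots> = b * z$1 - y * (z$1)^2 - (z$1)^3/3" using y by (simp add: y_def)
  finally have "(z$1 + y) - (z$1 + y)^3/3 + y^3/3 - y = b * z$1 - y * (z$1)^2 - (z$1)^3/3" .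
  moreover have "b * fhn_y2 a b c \<sigma> = a + c * y"
    using assms(1) by (simp add: fhn_y2_def y_def)
  ultimately show ?thesis
    by (simp add: fhn_def fhn_ys_def fhn_I_def vec_eq_iff forall_2 algebra_simps flip: y_def)
qed

lemma fhn_homological_solution:
  fixes b c y :: real
  assumes y: "y^2 = 1 - b" and ne: "c - b^2 \<noteq> 0"
    and e_def: "e = c - b^2"
    and K_def: "K = (b^2 - 2*b + c) / (4 * (b^2 - c)^2)"
    and A_def: "A = -4*b*c*y/(3*e)" and B_def: "B = 2*(b^2+c)*y/e"
    and C_def: "C = -4*b*y/e" and D_def: "D = 4*y/(3*e)"
    and E1_def: "E1 = K*(4*b^2+5*c)/3 + 4*b*(1-b)/(3*e)"
    and E2_def: "E2 = -3*K*b" and E3_def: "E3 = K"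
    and E0_def: "E0 = (2*b*E1 - 10*K*b*c + 2*b/3 - 4*(b^2+c)*(1-b)/e)/4"
  shows "3*A*b + B*c - 2*c*y = 0" "-3*A + B*b + 2*C*c + 2*b*y = 0"
    "-2*B - C*b + 3*D*c = 0" "-C - 3*D*b = 0"
    "4*b*E0 + c*E1 - 2*c/3 - 3*A*y + K*c^2 = 0"
    "2*b*E1 - 4*E0 + 2*c*E2 + 2*b/3 - 2*B*y - 4*K*b*c = 0"
    "-3*E1 + 3*c*E3 - C*y + K*(4*b^2+2*c) = 0"
    "-2*b*E3 - 2*E2 - 4*K*b = 0"
    "- E3 + K = 0"
proof -
  have e: "e \<noteq> 0" using ne by (simp add: e_def)
  have c: "c = e + b^2" by (simp add: e_def)
  have b: "b = 1 - y^2" using y by simp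
  have yy: "y * y = 1 - b" using y by (simp add: power2_eq_square)
  have K: "K = (b^2 - 2*b + c) / (4 * e^2)"
    unfolding K_def e_def by (simp add: power2_eq_square algebra_simps)
  show "3*A*b + B*c - 2*c*y = 0" "-3*A + B*b + 2*C*c + 2*b*y = 0" "-2*B - C*b + 3*D*c = 0"
    using e unfolding A_def B_def C_def D_def
    by (simp_all add: field_simps) (simp_all add: c algebra_simps power2_eq_square)
  show "-C - 3*D*b = 0" "-2*b*E3 - 2*E2 - 4*K*b = 0" "- E3 + K = 0"
    using e unfolding C_def D_def E2_def E3_def by (simp_all add: field_simps)
  have Cy: "C*y = -4*b*(1-b)/e" unfolding C_def by (simp add: yy[symmetric] field_simps)
  show "-3*E1 + 3*c*E3 - C*y + K*(4*b^2+2*c) = 0"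
    unfolding Cy E1_def E3_def using e by (simp add: field_simps)
  show "2*b*E1 - 4*E0 + 2*c*E2 + 2*b/3 - 2*B*y - 4*K*b*c = 0"
    unfolding B_def E0_def E2_def using e
    by (simp add: field_simps) (simp add: c b algebra_simps power2_eq_square)
  show "4*b*E0 + c*E1 - 2*c/3 - 3*A*y + K*c^2 = 0"
    unfolding A_def E0_def E1_def E2_def K using e
    by (simp add: field_simps) (insert c b, algebra)
qed

lemma fhn_quartic_lie_identity:
  fixes b c y K A B C D E0 E1 E2 E3 u w :: real
  assumes "3*A*b + B*c - 2*c*y = 0" "-3*A + B*b + 2*C*c + 2*b*y = 0"
    "-2*B - C*b + 3*D*c = 0" "-C - 3*D*b = 0"
    "4*b*E0 + c*E1 - 2*c/3 - 3*A*y + K*c^2 = 0"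
    "2*b*E1 - 4*E0 + 2*c*E2 + 2*b/3 - 2*B*y - 4*K*b*c = 0"
    "-3*E1 + 3*c*E3 - C*y + K*(4*b^2+2*c) = 0"
    "-2*b*E3 - 2*E2 - 4*K*b = 0"
    "- E3 + K = 0"
  defines "ms \<equiv> [(c, 2, 0), (-2*b, 1, 1), (1, 0, 2), (A, 3, 0), (B, 2, 1), (C, 1, 2), (D, 0, 3),
      (E0, 4, 0), (E1, 3, 1), (E2, 2, 2), (E3, 1, 3)]"
  shows "monomial_sum (monomials_dx ms) u w * (b*u - w - y*u^2 - u^3/3)
      + monomial_sum (monomials_dy ms) u w * (c*u - b*w) + K * (c*u^2 - 2*b*u*w + w^2)^2
    = monomial_sum [(-A, 5, 0), (-2*B/3, 4, 1), (-C/3, 3, 2), (-4*E0*y, 5, 0), (-3*E1*y, 4, 1),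
        (-2*E2*y, 3, 2), (-E3*y, 2, 3), (-4*E0/3, 6, 0), (-E1, 5, 1), (-2*E2/3, 4, 2), (-E3/3, 3, 3)] u w"
    (is "?L = ?R")
proof -
  have "?L - ?R = u^3 * (3*A*b + B*c - 2*c*y) + u^2*w * (-3*A + B*b + 2*C*c + 2*b*y)
      + u*w^2 * (-2*B - C*b + 3*D*c) + w^3 * (-C - 3*D*b)
      + u^4 * (4*b*E0 + c*E1 - 2*c/3 - 3*A*y + K*c^2)
      + u^3*w * (2*b*E1 - 4*E0 + 2*c*E2 + 2*b/3 - 2*B*y - 4*K*b*c)
      + u^2*w^2 * (-3*E1 + 3*c*E3 - C*y + K*(4*b^2+2*c))
      + u*w^3 * (-2*b*E3 - 2*E2 - 4*K*b) + w^4 * (- E3 + K)"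
    by (simp add: ms_def monomials_dx_def monomials_dy_def) algebra
  also have "\<dots> = 0"
    unfolding assms(1-9) by simp
  finally show ?thesis by simp
qed

lemma fhn_normal_form:
  fixes b c y :: real
  assumes y: "y^2 = 1 - b" and ne: "c \<noteq> b^2"
  defines "q \<equiv> \<lambda>z::real^2. vector [b * z$1 - z$2 - y * (z$1)^2 - (z$1)^3/3, c * z$1 - b * z$2]"
    and "\<psi> \<equiv> \<lambda>z::real^2. c * (z$1)^2 - 2 * b * (z$1) * (z$2) + (z$2)^2"
    and "K \<equiv> (b^2 - 2*b + c) / (4 * (b^2 - c)^2)"
  shows "\<exists>(N::nat) (C::nat \<Rightarrow> nat \<Rightarrow> real).
    let \<psi>h = (\<lambda>z::real^2. \<Sum>i\<le>N. \<Sum>j\<le>N. C i j * (z$1)^i * (z$2)^j) in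
    (\<lambda>z. \<psi>h z - \<psi> z) \<in> O[at 0](\<lambda>z. norm z ^ 3) \<and>
    (\<lambda>z. lie_deriv q \<psi>h z + K * (\<psi> z)^2) \<in> O[at 0](\<lambda>z. norm z ^ 5)"
proof -
  define e where "e = c - b^2"
  define A where "A = -4*b*c*y/(3*e)"
  define B where "B = 2*(b^2+c)*y/e"
  define C where "C = -4*b*y/e"
  define D where "D = 4*y/(3*e)"
  define E1 where "E1 = K*(4*b^2+5*c)/3 + 4*b*(1-b)/(3*e)"
  define E2 where "E2 = -3*K*b"
  define E3 where "E3 = K"
  define E0 where "E0 = (2*b*E1 - 10*K*b*c + 2*b/3 - 4*(b^2+c)*(1-b)/e)/4"
  define ms :: "(real \<times> nat \<times> nat) list" where "ms = [(c, 2, 0), (-2*b, 1, 1), (1, 0, 2), (A, 3, 0), (B, 2, 1), (C, 1, 2), (D, 0, 3),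
      (E0, 4, 0), (E1, 3, 1), (E2, 2, 2), (E3, 1, 3)]"
  define R :: "(real \<times> nat \<times> nat) list" where "R = [(-A, 5, 0), (-2*B/3, 4, 1), (-C/3, 3, 2), (-4*E0*y, 5, 0), (-3*E1*y, 4, 1),
      (-2*E2*y, 3, 2), (-E3*y, 2, 3), (-4*E0/3, 6, 0), (-E1, 5, 1), (-2*E2/3, 4, 2), (-E3/3, 3, 3)]"
  define \<psi>h where "\<psi>h = (\<lambda>z::real^2. monomial_sum ms (z$1) (z$2))"
  have "c - b^2 \<noteq> 0" using ne by simp
  note identity = fhn_quartic_lie_identity[OF fhn_homological_solution[OF y this e_def K_def[THEN meta_eq_to_obj_eq]
      A_def B_def C_def D_def E1_def E2_def E3_def E0_def], folded ms_def R_def]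
  have "(\<lambda>z. \<psi>h z - \<psi> z) = (\<lambda>z. monomial_sum (drop 3 ms) (z$1) (z$2))"
    by (simp add: \<psi>h_def \<psi>_def ms_def fun_eq_iff)
  also have "\<dots> \<in> O[at 0](\<lambda>z. norm z ^ 3)"
    by (rule monomial_sum_bigo_norm_power) (simp add: ms_def)
  finally have O3: "(\<lambda>z. \<psi>h z - \<psi> z) \<in> O[at 0](\<lambda>z. norm z ^ 3)" .
  have "(\<lambda>z. lie_deriv q \<psi>h z + K * (\<psi> z)^2) = (\<lambda>z. monomial_sum R (z$1) (z$2))"
    unfolding \<psi>h_def
    by (simp add: has_derivative_imp_lie_deriv[OF has_derivative_monomial_sum] q_def \<psi>_def identity)
  also have "\<dots> \<in> O[at 0](\<lambda>z. norm z ^ 5)"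
    by (rule monomial_sum_bigo_norm_power) (simp add: R_def)
  finally have O5: "(\<lambda>z. lie_deriv q \<psi>h z + K * (\<psi> z)^2) \<in> O[at 0](\<lambda>z. norm z ^ 5)" .
  have "\<psi>h = (\<lambda>z. \<Sum>i\<le>4. \<Sum>j\<le>4. monomial_coeff ms i j * (z$1)^i * (z$2)^j)"
    unfolding \<psi>h_def by (rule ext monomial_sum_eq_double_sum)+ (simp add: ms_def)
  with O3 O5 show ?thesis
    by (intro exI[of _ 4] exI[of _ "monomial_coeff ms"]) (simp add: Let_def)
qed

theorem mainTheorem10:
  fixes a b c \<sigma> :: real
  assumes "0 < b" "b < 1" "b < c" "\<sigma> \<in> {1, -1}"
  defines "ys \<equiv> fhn_ys a b c \<sigma>"
    and "f \<equiv> fhn a b c (fhn_I a b c \<sigma>)"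
    and "J \<equiv> jacobian (fhn a b c (fhn_I a b c \<sigma>)) (at (fhn_ys a b c \<sigma>))"
    and "q \<equiv> (\<lambda>z. fhn a b c (fhn_I a b c \<sigma>) (z + fhn_ys a b c \<sigma>))"
    and "\<psi> \<equiv> (\<lambda>z::real^2. c * (z$1)^2 - 2 * b * (z$1) * (z$2) + (z$2)^2)"
    and "K \<equiv> (b^2 - 2*b + c) / (4 * (b^2 - c)^2)"
  shows "f ys = 0 \<and> f differentiable (at ys) \<and>
    trace J = 0 \<and> det J = c - b^2 \<and> det J > 0 \<and>
    (\<exists>\<omega>>0. \<forall>l. cplx_eigenvalue J l \<longleftrightarrow> l = \<i> * of_real \<omega> \<or> l = - \<i> * of_real \<omega>) \<and>
    (\<forall>z. z \<noteq> 0 \<longrightarrow> \<psi> z > 0) \<and>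
    (\<forall>\<alpha> \<beta> \<gamma>.
       (\<forall>z. lie_deriv (\<lambda>z. J *v z) (\<lambda>z. \<alpha> * (z$1)^2 + \<beta> * (z$1) * (z$2) + \<gamma> * (z$2)^2) z = 0)
       \<longleftrightarrow> (\<exists>t. \<alpha> = t * c \<and> \<beta> = - 2 * b * t \<and> \<gamma> = t)) \<and>
    (\<exists>(N::nat) (C::nat \<Rightarrow> nat \<Rightarrow> real).
       let \<psi>h = (\<lambda>z::real^2. \<Sum>i\<le>N. \<Sum>j\<le>N. C i j * (z$1)^i * (z$2)^j) in
       (\<lambda>z. \<psi>h z - \<psi> z) \<in> O[at 0](\<lambda>z. norm z ^ 3) \<and>
       (\<lambda>z. lie_deriv q \<psi>h z + K * (\<psi> z)^2) \<in> O[at 0](\<lambda>z. norm z ^ 5)) \<and>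
    (c \<ge> 1 \<longrightarrow> - K < 0)"
proof -
  define y where "y = fhn_y1 b \<sigma>"
  have y: "y^2 = 1 - b" using fhn_y1_squared assms(2,4) unfolding y_def by simp
  have "b^2 < b" using assms(1,2) by (simp add: power2_eq_square)
  with assms(3) have bc: "b^2 < c" by simp
  have q: "q = (\<lambda>z. vector [b * z$1 - z$2 - y * (z$1)^2 - (z$1)^3/3, c * z$1 - b * z$2])"
    using fhn_translated[of b \<sigma>] assms(1) y by (simp add: q_def y_def)
  have "f ys = q 0" by (simp add: f_def ys_def q_def)
  then have stationary: "f ys = 0" by (simp add: q vec_eq_iff forall_2)
  have J: "J = vector [vector [b, -1], vector [c, -b]]"
    using y by (simp add: J_def jacobian_fhn fhn_ys_def y_def)
  have trace: "trace J = 0" and det: "det J = (sqrt (c - b^2))^2"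
    using bc by (simp_all add: J trace_def sum_2 det_2 power2_eq_square)
  have "(1 - b)^2 > 0" using assms(2) by simp
  moreover have "b^2 - 2*b + c = (1 - b)^2 + (c - 1)" by (simp add: power2_eq_square algebra_simps)
  ultimately have "c \<ge> 1 \<Longrightarrow> b^2 - 2*b + c > 0" by linarith
  then have K_neg: "c \<ge> 1 \<longrightarrow> - K < 0" using bc by (simp add: K_def)
  have "f differentiable (at ys)"
    unfolding f_def by (rule differentiableI[OF fhn_has_derivative])
  moreover have "\<exists>\<omega>>0. \<forall>l. cplx_eigenvalue J l \<longleftrightarrow> l = \<i> * of_real \<omega> \<or> l = - \<i> * of_real \<omega>"
    using bc cplx_eigenvalue_2_traceless[OF trace det] by (intro exI[of _ "sqrt (c - b^2)"]) simp
  moreover have "\<psi> z > 0" if "z \<noteq> 0" for z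
    using quadratic_form_pos[OF bc, of "z$1" "z$2"] that by (simp add: \<psi>_def vec_eq_iff forall_2)
  ultimately show ?thesis
    using stationary trace det bc K_neg quadratic_first_integrals_fhn_linearization[OF J]
      fhn_normal_form[OF y, of c] unfolding q \<psi>_def K_def by simp
qed

end
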